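(* Let $m\in[1/2,1)$ and let $g_s:\mathbb{T}\to\mathbb{T}$ be as in the context. Then for every $s\in J_\Gamma:=\left[\frac{1}{-2+1/(m-m^2)},\,\frac12\right]$, the map $g_s$ has a fixed point.
   Context: Let $\mathbb{T}=\mathbb{R}/\mathbb{Z}\cong[0,1)$, $m\in[1/2,1)$ and $\Lambda=m/(1-m)$. Define $h:\mathbb{T}\to\mathbb{T}$ by $h(y)=1-m+\Lambda y$ for $y\in[0,1-m]$ and $h(y)=\Lambda^{-1}(y-(1-m))$ for $y\in[1-m,1)$, and for $s\in\mathbb{R}$ let $g_s(x)=h(x+s \bmod 1)$. Equivalently, $g_s$ is the first-return map to the bottom side of the unit square of the upward linear flow in direction $(s,1)$ on the dilation surface obtained from the unit square by identifying its vertical sides by translation, gluing the top segment $[0,1-m]\times\{1\}$ to the bottom segment $[1-m,1]\times\{0\}$ via $(y,1)\mapsto(1-m+\Lambda y,0)$, and gluing $[1-m,1]\times\{1\}$ to $[0,1-m]\times\{0\}$ via $(y,1)\mapsto(\Lambda^{-1}(y-1+m),0)$. *)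

theory Defs
  imports Complex_Main
begin

text \<open>The circle T = R/Z is represented by its fundamental domain [0,1); reduction mod 1 is frac.\<close>

definition Lam :: "real \<Rightarrow> real" where
  "Lam m = m / (1 - m)"

text \<open>h on [0,1). At y = 1-m both branches agree mod 1 (value 1 = 0), we use the representative 0.\<close>
definition hmap :: "real \<Rightarrow> real \<Rightarrow> real" where
  "hmap m y = (if y < 1 - m then 1 - m + Lam m * y else (y - (1 - m)) / Lam m)"

definition gmap :: "real \<Rightarrow> real \<Rightarrow> real \<Rightarrow> real" where
  "gmap m s x = hmap m (frac (x + s))"

end

theory Submission
  imports Defs
begin

text \<open>For \<open>m > 1/2\<close> the branch \<open>y \<mapsto> (y - (1 - m)) / \<Lambda>\<close> of \<open>h\<close> on \<open>[1 - m, 1)\<close> contracts,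
  and whenever \<open>1 - m \<le> s < m\<close> the affine equation \<open>\<Lambda> x = x + s - (1 - m)\<close> has its solution
  \<open>x\<close> with \<open>x + s\<close> in that branch; for \<open>s = m\<close> the point \<open>1 - m\<close> is fixed, since \<open>h 0 = 1 - m\<close>.
  The left endpoint of \<open>J\<^sub>\<Gamma>\<close> equals \<open>(m - m\<^sup>2) / (m\<^sup>2 + (1 - m)\<^sup>2)\<close>, which exceeds \<open>1 - m\<close>
  by \<open>(1 - m)\<^sup>2 (2m - 1) / (m\<^sup>2 + (1 - m)\<^sup>2) \<ge> 0\<close>, so \<open>J\<^sub>\<Gamma> \<subseteq> [1 - m, m]\<close>.\<close>

lemma gmap_fixed_point_contracting_branch:
  fixes m s :: real
  assumes "1/2 < m" and "m < 1" and "1 - m \<le> s" and "s < m"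
  shows "\<exists>x\<in>{0..<1}. gmap m s x = x"
proof -
  define x where "x = (s - (1 - m)) * (1 - m) / (2*m - 1)"
  have "x \<ge> 0"
    unfolding x_def using assms by simp
  have "(2*m - 1) * (1 - s) - (s - (1 - m)) * (1 - m) = m * (m - s)"
    by (simp add: algebra_simps)
  then have "(s - (1 - m)) * (1 - m) < (1 - s) * (2*m - 1)"
    using assms by (simp add: algebra_simps)
  then have "x < 1 - s"
    unfolding x_def using assms by (simp add: pos_divide_less_eq)
  then have "x + s < 1"
    by simp
  then have "frac (x + s) = x + s"
    using \<open>x \<ge> 0\<close> assms by (simp add: frac_eq)
  moreover have "(x + s - (1 - m)) / Lam m = x"
  proof -
    have "x * (2*m - 1) = (s - (1 - m)) * (1 - m)"
      unfolding x_def using assms by simp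
    then show ?thesis
      using assms by (simp add: Lam_def field_simps)
  qed
  moreover have "\<not> x + s < 1 - m"
    using \<open>x \<ge> 0\<close> assms by simp
  ultimately have "gmap m s x = x"
    by (simp add: gmap_def hmap_def)
  then show ?thesis
    using \<open>x \<ge> 0\<close> \<open>x + s < 1\<close> assms by auto
qed

lemma gmap_fixed_point_at_m:
  fixes m :: real
  assumes "m < 1"
  shows "gmap m m (1 - m) = 1 - m"
  using assms by (simp add: gmap_def hmap_def)

lemma gmap_has_fixed_point:
  fixes m s :: real
  assumes "1/2 \<le> m" and "m < 1" and "1 - m \<le> s" and "s \<le> m"
  shows "\<exists>x\<in>{0..<1}. gmap m s x = x"
proof (cases "s = m")
  case True
  then show ?thesis
    using gmap_fixed_point_at_m[OF \<open>m < 1\<close>] assms by force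
next
  case False
  then show ?thesis
    using gmap_fixed_point_contracting_branch assms by simp
qed

lemma J_Gamma_left_endpoint_ge:
  fixes m :: real
  assumes "1/2 \<le> m" and "m < 1"
  shows "1 - m \<le> 1 / (-2 + 1 / (m - m^2))"
proof -
  have "m - m^2 > 0" and "m^2 + (1 - m)^2 > 0"
    using assms by (simp_all add: power2_eq_square add_pos_nonneg)
  then have "-2 + 1 / (m - m^2) = (m^2 + (1 - m)^2) / (m - m^2)"
    by (simp add: field_simps) (simp add: algebra_simps power2_eq_square)
  then have endpoint: "1 / (-2 + 1 / (m - m^2)) = (m - m^2) / (m^2 + (1 - m)^2)"
    by simp
  have "m - m^2 - (1 - m) * (m^2 + (1 - m)^2) = (1 - m)^2 * (2*m - 1)"
    by (simp add: algebra_simps power2_eq_square)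
  also have "\<dots> \<ge> 0"
    using assms by simp
  finally show ?thesis
    unfolding endpoint using \<open>m^2 + (1 - m)^2 > 0\<close> by (simp add: le_divide_eq)
qed

theorem lemmaA2:
  fixes m s :: real
  assumes "1/2 \<le> m" and "m < 1"
    and "1 / (-2 + 1 / (m - m^2)) \<le> s" and "s \<le> 1/2"
  shows "\<exists>x\<in>{0..<1}. gmap m s x = x"
proof (rule gmap_has_fixed_point)
  show "1 - m \<le> s"
    using J_Gamma_left_endpoint_ge[OF assms(1,2)] assms(3) by linarith
qed (use assms in auto)

end
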